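(* For any instance of MPMD or MBPMD, the total waiting cost incurred by Greedy Dual equals $\sum_{S\subseteq V}\mathrm{sur}(S)\,y_S(T)$, where $V$ is the set of all requests and $T$ is the time at which Greedy Dual matches the last request.
   Context: Problem (MPMD / MBPMD). Let $(\mathcal{X},\mathrm{dist})$ be a metric space. An instance consists of $2m$ requests $u_1,\dots,u_{2m}$. Each request $u$ is a triple $(\mathrm{pos}(u),\mathrm{atime}(u),\mathrm{sgn}(u))$, where $\mathrm{pos}(u)\in\mathcal{X}$ is its location and $\mathrm{atime}(u)\ge0$ is its arrival time, with arrival times nondecreasing. In MPMD, $\mathrm{sgn}(u)=0$ for all requests. In MBPMD, exactly $m$ requests have sign $+1$ and $m$ have sign $-1$. At time $\tau$, an algorithm may match two arrived, unmatched requests $u,v$ with $\mathrm{sgn}(u)=-\mathrm{sgn}(v)$, at cost $\mathrm{dist}(\mathrm{pos}(u),\mathrm{pos}(v))$ (connection cost) plus $(\tau-\mathrm{atime}(u))+(\tau-\mathrm{atime}(v))$ (waiting costs). All requests must eventually be matched. The total waiting cost of an algorithm is the sum, over all requests, of the time between the request's arrival and the moment it is matched. Notation. Edges are unordered pairs $\{u,v\}$ of distinct requests with $\mathrm{sgn}(u)=-\mathrm{sgn}(v)$. For a set $S$ of requests, $\delta(S)$ is the set of edges with exactly one endpoint in $S$. In MPMD, $\mathrm{sur}(S)=|S|\bmod 2$; in MBPMD, $\mathrm{sur}(S)=|\sum_{u\in S}\mathrm{sgn}(u)|$. For an edge $e=(u,v)$, $\mathrm{cost}(e)=\mathrm{dist}(\mathrm{pos}(u),\mathrm{pos}(v))+|\mathrm{atime}(u)-\mathrm{atime}(v)|$.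 Algorithm Greedy Dual (GD). GD maintains a dual variable $y_S\ge0$ for every set $S$ of already-arrived requests; $y_S(\tau)$ denotes its value at time $\tau$. It also maintains a partition of the arrived requests into active sets, with $\mathcal{A}(u)$ denoting the active set containing $u$. An active set is growing if it contains at least one free request, and non-growing otherwise. - When a request $u$ arrives, $\mathcal{A}(u)\leftarrow\{u\}$ becomes a new active set, and $y_S\leftarrow 0$ for every new set $S$ containing $u$. - Tight-constraint event: while there is an edge $e=(u,v)$ between arrived requests with $\mathcal{A}(u)\neq\mathcal{A}(v)$ and $\sum_{S:\,e\in\delta(S)}y_S=\mathrm{cost}(e)$, GD does the following. It merges the two sets: $S=\mathcal{A}(u)\cup\mathcal{A}(v)$ becomes active and $\mathcal{A}(w)\leftarrow S$ for all $w\in S$, while $\mathcal{A}(u)$ and $\mathcal{A}(v)$ become inactive. It marks the edge $e$. Then, while there are free $u',v'\in S$ with $\mathrm{sgn}(u')=-\mathrm{sgn}(v')$, it matches $u'$ with $v'$ at the current time. - At all other times, $y_S$ increases continuously at rate $1$ (the same rate as time) for every active growing set $S$; all other dual variables stay constant. *)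

theory Defs
  imports Main "HOL-Analysis.Analysis"
begin

text \<open>Requests are the elements of a finite set V of some type 'r; each request u has a
position pos u in a metric space, an arrival time atime u and a sign sg u.\<close>

definition mpmd_instance :: "'r set \<Rightarrow> ('r \<Rightarrow> real) \<Rightarrow> ('r \<Rightarrow> int) \<Rightarrow> bool" where
  "mpmd_instance V atime sg \<longleftrightarrow>
     finite V \<and> even (card V) \<and> (\<forall>u\<in>V. atime u \<ge> 0) \<and> (\<forall>u\<in>V. sg u = 0)"

definition mbpmd_instance :: "'r set \<Rightarrow> ('r \<Rightarrow> real) \<Rightarrow> ('r \<Rightarrow> int) \<Rightarrow> bool" where
  "mbpmd_instance V atime sg \<longleftrightarrow>
     finite V \<and> (\<forall>u\<in>V. atime u \<ge> 0) \<and> (\<forall>u\<in>V. sg u = 1 \<or> sg u = -1) \<and>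
     card {u\<in>V. sg u = 1} = card {u\<in>V. sg u = -1}"

definition is_edge :: "('r \<Rightarrow> int) \<Rightarrow> 'r \<Rightarrow> 'r \<Rightarrow> bool" where
  "is_edge sg u v \<longleftrightarrow> u \<noteq> v \<and> sg u = - sg v"

definition edge_cost :: "('r \<Rightarrow> 'p::metric_space) \<Rightarrow> ('r \<Rightarrow> real) \<Rightarrow> 'r \<Rightarrow> 'r \<Rightarrow> real" where
  "edge_cost pos atime u v = dist (pos u) (pos v) + \<bar>atime u - atime v\<bar>"

definition dual_load :: "'r set \<Rightarrow> ('r set \<Rightarrow> real) \<Rightarrow> 'r \<Rightarrow> 'r \<Rightarrow> real" where
  "dual_load V y u v = (\<Sum>S\<in>{S. S \<subseteq> V \<and> (u \<in> S) \<noteq> (v \<in> S)}. y S)"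

text \<open>Surplus; the flag bip selects MBPMD (True) or MPMD (False).\<close>
definition sur :: "bool \<Rightarrow> ('r \<Rightarrow> int) \<Rightarrow> 'r set \<Rightarrow> nat" where
  "sur bip sg S = (if bip then nat \<bar>\<Sum>u\<in>S. sg u\<bar> else card S mod 2)"

text \<open>A state: current time, arrived requests, free (arrived, unmatched) requests,
  active set of each arrived request, dual variables, and the matching time of each
  matched request.\<close>
record 'r gd_state =
  tm  :: real
  arr :: "'r set"
  fr  :: "'r set"
  act :: "'r \<Rightarrow> 'r set"
  y   :: "'r set \<Rightarrow> real"
  mt  :: "'r \<Rightarrow> real"

definition gd_init :: "'r gd_state" where
  "gd_init = \<lparr>tm = 0, arr = {}, fr = {}, act = (\<lambda>_. {}), y = (\<lambda>_. 0), mt = (\<lambda>_. 0)\<rparr>"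

inductive greedy_match :: "('r \<Rightarrow> int) \<Rightarrow> 'r set \<Rightarrow> real \<Rightarrow>
    'r set \<times> ('r \<Rightarrow> real) \<Rightarrow> 'r set \<times> ('r \<Rightarrow> real) \<Rightarrow> bool"
  for sg S \<tau> where
  gm_stop: "\<not> (\<exists>u\<in>F \<inter> S. \<exists>v\<in>F \<inter> S. is_edge sg u v) \<Longrightarrow>
     greedy_match sg S \<tau> (F, M) (F, M)"
| gm_step: "u \<in> F \<inter> S \<Longrightarrow> v \<in> F \<inter> S \<Longrightarrow> is_edge sg u v \<Longrightarrow>
     greedy_match sg S \<tau> (F - {u, v}, M(u := \<tau>, v := \<tau>)) R \<Longrightarrow>
     greedy_match sg S \<tau> (F, M) R"

text \<open>One step of Greedy Dual: an arrival, a tight-constraint event (merge + matching),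
  or a continuous time advance during which every active growing set grows at rate 1.
  Time only advances when no event is pending at the current time, it never skips an
  arrival and it never lets an edge constraint between different active sets become
  violated; time stops once all requests have arrived and been matched.\<close>
inductive gd_step :: "'r set \<Rightarrow> ('r \<Rightarrow> 'p::metric_space) \<Rightarrow> ('r \<Rightarrow> real) \<Rightarrow> ('r \<Rightarrow> int) \<Rightarrow>
    'r gd_state \<Rightarrow> 'r gd_state \<Rightarrow> bool"
  for V pos atime sg where
  arrive: "u \<in> V \<Longrightarrow> u \<notin> arr s \<Longrightarrow> atime u = tm s \<Longrightarrow>
     gd_step V pos atime sg s
       (s\<lparr>arr := insert u (arr s), fr := insert u (fr s), act := (act s)(u := {u}),
          y := (\<lambda>S. if u \<in> S then 0 else y s S)\<rparr>)"
| tight: "u \<in> arr s \<Longrightarrow> v \<in> arr s \<Longrightarrow> is_edge sg u v \<Longrightarrow> act s u \<noteq> act s v \<Longrightarrow>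
     dual_load V (y s) u v = edge_cost pos atime u v \<Longrightarrow>
     S = act s u \<union> act s v \<Longrightarrow>
     greedy_match sg S (tm s) (fr s, mt s) (F', M') \<Longrightarrow>
     gd_step V pos atime sg s
       (s\<lparr>act := (\<lambda>w. if w \<in> S then S else act s w), fr := F', mt := M'\<rparr>)"
| advance: "\<tau>' > tm s \<Longrightarrow> \<not> (arr s = V \<and> fr s = {}) \<Longrightarrow>
     (\<forall>u\<in>V - arr s. atime u \<ge> \<tau>') \<Longrightarrow>
     y' = (\<lambda>S. if S \<in> act s ` arr s \<and> S \<inter> fr s \<noteq> {} then y s S + (\<tau>' - tm s) else y s S) \<Longrightarrow>
     (\<forall>u\<in>arr s. \<forall>v\<in>arr s. is_edge sg u v \<and> act s u \<noteq> act s v \<longrightarrow>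
         dual_load V (y s) u v < edge_cost pos atime u v \<and>
         dual_load V y' u v \<le> edge_cost pos atime u v) \<Longrightarrow>
     gd_step V pos atime sg s (s\<lparr>tm := \<tau>', y := y'\<rparr>)"

end

theory Submission
  imports Defs
begin

text \<open>Greedy Dual's waiting cost and the dual objective \<open>\<Sum> sur(S) y_S\<close> grow at the same
  rate. While time advances by d, every free request waits d longer and every growing active
  set S gains d in its dual, contributing sur(S) d. The matched requests of an active set are
  matched among themselves, and its free requests are pairwise unmatchable (all of one sign in
  MBPMD, at most one in MPMD), so a growing set contains exactly sur(S) free requests.
  Arrivals and tight-constraint events change neither quantity: a request arrives with zero
  waiting cost and all duals of sets containing it are zero, and matchings happen at the
  current time.\<close>

definition admissible_signs :: "bool \<Rightarrow> ('r \<Rightarrow> int) \<Rightarrow> 'r set \<Rightarrow> bool" where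
  "admissible_signs bip sg A \<longleftrightarrow> (\<forall>u\<in>A. if bip then sg u = 1 \<or> sg u = -1 else sg u = 0)"

lemma admissible_signs_subset:
  "admissible_signs bip sg V \<Longrightarrow> A \<subseteq> V \<Longrightarrow> admissible_signs bip sg A"
  unfolding admissible_signs_def by blast

lemma instance_finite_admissible_signs:
  "(if bip then mbpmd_instance V atime sg else mpmd_instance V atime sg) \<Longrightarrow>
   finite V \<and> admissible_signs bip sg V"
  by (cases bip) (auto simp: mbpmd_instance_def mpmd_instance_def admissible_signs_def)

lemma greedy_match_result:
  assumes "greedy_match sg S \<tau> (F, M) (F', M')" and "finite F"
  shows "F' \<subseteq> F" "F - F' \<subseteq> S" "even (card (F - F'))" "sum sg (F - F') = 0"
    "M' = (\<lambda>w. if w \<in> F - F' then \<tau> else M w)"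
    "\<forall>a\<in>F' \<inter> S. \<forall>b\<in>F' \<inter> S. \<not> is_edge sg a b"
proof -
  have "F' \<subseteq> F \<and> F - F' \<subseteq> S \<and> even (card (F - F')) \<and> sum sg (F - F') = 0 \<and>
        M' = (\<lambda>w. if w \<in> F - F' then \<tau> else M w) \<and>
        (\<forall>a\<in>F' \<inter> S. \<forall>b\<in>F' \<inter> S. \<not> is_edge sg a b)"
    using assms
  proof (induction "(F, M)" "(F', M')" arbitrary: F M rule: greedy_match.induct)
    case gm_stop
    then show ?case by auto
  next
    case (gm_step u F v M)
    have uv: "u \<noteq> v" "sg u = - sg v"
      using \<open>is_edge sg u v\<close> by (auto simp: is_edge_def)
    let ?R = "F - {u, v} - F'"
    have IH: "F' \<subseteq> F - {u, v}" "?R \<subseteq> S" "even (card ?R)" "sum sg ?R = 0"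
      "M' = (\<lambda>w. if w \<in> ?R then \<tau> else (M(u := \<tau>, v := \<tau>)) w)"
      "\<forall>a\<in>F' \<inter> S. \<forall>b\<in>F' \<inter> S. \<not> is_edge sg a b"
      using gm_step by auto
    have split: "F - F' = insert u (insert v ?R)" and "u \<notin> insert v ?R" "v \<notin> ?R"
      using IH(1) gm_step.hyps(1,2) uv(1) by auto
    then have "card (F - F') = card ?R + 2" "sum sg (F - F') = sg u + sg v + sum sg ?R"
      using gm_step.prems by auto
    then show ?case using IH uv split gm_step.hyps(1,2) by auto
  qed
  then show "F' \<subseteq> F" "F - F' \<subseteq> S" "even (card (F - F'))" "sum sg (F - F') = 0"
    "M' = (\<lambda>w. if w \<in> F - F' then \<tau> else M w)"
    "\<forall>a\<in>F' \<inter> S. \<forall>b\<in>F' \<inter> S. \<not> is_edge sg a b"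
    by auto
qed

text \<open>The requests of F \<inter> A are pairwise unmatchable, so in MBPMD they all have the same
  sign and in MPMD there is at most one of them.\<close>
lemma card_unmatched_eq_sur:
  assumes signs: "admissible_signs bip sg A" and "finite A"
    and even: "even (card (A - F))" and balanced: "sum sg (A - F) = 0"
    and no_edge: "\<forall>a\<in>F \<inter> A. \<forall>b\<in>F \<inter> A. \<not> is_edge sg a b"
  shows "card (F \<inter> A) = sur bip sg A"
proof (cases bip)
  case True
  have "(\<forall>u\<in>F \<inter> A. sg u = 1) \<or> (\<forall>u\<in>F \<inter> A. sg u = -1)"
    using signs no_edge True unfolding admissible_signs_def is_edge_def
    by (metis IntD2 equation_minus_iff zero_neq_one)
  then have "\<bar>sum sg (F \<inter> A)\<bar> = int (card (F \<inter> A))"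
    by (auto simp: sum_negf)
  moreover have "sum sg A = sum sg (A - F) + sum sg (F \<inter> A)"
    using \<open>finite A\<close> by (metis Int_commute add.commute sum.Int_Diff)
  ultimately show ?thesis
    using balanced True by (simp add: sur_def)
next
  case False
  then have "card (F \<inter> A) \<le> 1"
    using signs no_edge \<open>finite A\<close>
    by (auto simp: admissible_signs_def is_edge_def card_le_Suc0_iff_eq)
  moreover have "card A = card (A - F) + card (F \<inter> A)"
    using \<open>finite A\<close> by (metis Int_commute add.commute card_Int_Diff)
  ultimately show ?thesis
    using even False by (auto simp: sur_def)
qed

locale gd_wf =
  fixes V :: "'r set" and sg :: "'r \<Rightarrow> int" and s :: "'r gd_state"
  assumes finite_V: "finite V"
    and arr_subset: "arr s \<subseteq> V"
    and fr_subset: "fr s \<subseteq> arr s"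
    and self_in_act: "u \<in> arr s \<Longrightarrow> u \<in> act s u"
    and act_subset: "u \<in> arr s \<Longrightarrow> act s u \<subseteq> arr s"
    and act_eq: "u \<in> arr s \<Longrightarrow> w \<in> act s u \<Longrightarrow> act s w = act s u"
    and matched_even: "u \<in> arr s \<Longrightarrow> even (card (act s u - fr s))"
    and matched_balanced: "u \<in> arr s \<Longrightarrow> sum sg (act s u - fr s) = 0"
    and free_no_edge: "u \<in> arr s \<Longrightarrow> \<forall>a\<in>fr s \<inter> act s u. \<forall>b\<in>fr s \<inter> act s u. \<not> is_edge sg a b"
    and y_support: "y s S \<noteq> 0 \<Longrightarrow> S \<subseteq> arr s"
begin

lemma finite_arr: "finite (arr s)"
  using arr_subset finite_V by (rule finite_subset)

lemma finite_fr: "finite (fr s)"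
  using finite_arr fr_subset by (rule rev_finite_subset)

lemma finite_act: "u \<in> arr s \<Longrightarrow> finite (act s u)"
  using finite_arr act_subset by (rule rev_finite_subset)

lemma act_disjoint:
  assumes "u \<in> arr s" "v \<in> arr s" "act s u \<noteq> act s v"
  shows "act s u \<inter> act s v = {}"
  using assms act_eq by blast

lemma act_disjoint_outside:
  assumes "u \<in> arr s" "w \<in> arr s" "w \<notin> act s u"
  shows "act s w \<inter> act s u = {}"
  using assms act_disjoint self_in_act by blast

end

lemma gd_wf_init: "finite V \<Longrightarrow> gd_wf V sg gd_init"
  by unfold_locales (auto simp: gd_init_def)

lemma (in gd_wf) gd_wf_arrive:
  assumes "u \<in> V" "u \<notin> arr s"
  shows "gd_wf V sg (s\<lparr>arr := insert u (arr s), fr := insert u (fr s), act := (act s)(u := {u}),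
                        y := (\<lambda>S. if u \<in> S then 0 else y s S)\<rparr>)"
    (is "gd_wf V sg ?s")
proof -
  have fresh: "u \<notin> act s w" if "w \<in> arr s" for w
    using that assms(2) act_subset by blast
  have old: "act ?s w = act s w" if "w \<in> arr s" for w
    using that assms(2) by auto
  show ?thesis
  proof unfold_locales
    fix w assume w: "w \<in> arr ?s"
    have "w \<in> act ?s w \<and> act ?s w \<subseteq> arr ?s \<and> (\<forall>x\<in>act ?s w. act ?s x = act ?s w) \<and>
        even (card (act ?s w - fr ?s)) \<and> sum sg (act ?s w - fr ?s) = 0 \<and>
        (\<forall>a\<in>fr ?s \<inter> act ?s w. \<forall>b\<in>fr ?s \<inter> act ?s w. \<not> is_edge sg a b)"
    proof (cases "w = u")
      case True
      then show ?thesis by (auto simp: is_edge_def)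
    next
      case False
      with w have w_old: "w \<in> arr s" by simp
      have "act ?s x = act s w" if "x \<in> act s w" for x
        using that w_old act_eq act_subset old(1) by blast
      then show ?thesis
        unfolding old[OF w_old]
        using self_in_act[OF w_old] act_subset[OF w_old] matched_even[OF w_old]
          matched_balanced[OF w_old] free_no_edge[OF w_old] fresh[OF w_old]
        by (auto simp: Diff_insert0)

    qed
    then show "w \<in> act ?s w" "act ?s w \<subseteq> arr ?s"
      "even (card (act ?s w - fr ?s))" "sum sg (act ?s w - fr ?s) = 0"
      "\<forall>a\<in>fr ?s \<inter> act ?s w. \<forall>b\<in>fr ?s \<inter> act ?s w. \<not> is_edge sg a b"
      "\<And>x. x \<in> act ?s w \<Longrightarrow> act ?s x = act ?s w"
      by blast+
  qed (use assms finite_V arr_subset fr_subset y_support in \<open>auto split: if_splits\<close>)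
qed

lemma (in gd_wf) merged_matched_balanced:
  assumes u: "u \<in> arr s" "v \<in> arr s" "act s u \<noteq> act s v"
    and S: "S = act s u \<union> act s v"
    and gm: "greedy_match sg S (tm s) (fr s, mt s) (F', M')"
  shows "even (card (S - F'))" "sum sg (S - F') = 0"
proof -
  note matched = greedy_match_result[OF gm finite_fr]
  let ?U = "act s u - fr s" and ?W = "act s v - fr s" and ?N = "fr s - F'"
  have split: "S - F' = ?U \<union> (?W \<union> ?N)"
    using matched(1,2) S by blast
  have disjoint: "?U \<inter> (?W \<union> ?N) = {}" "?W \<inter> ?N = {}"
    using act_disjoint[OF u] by blast+
  have finite: "finite ?U" "finite ?W" "finite ?N"
    using finite_act[OF u(1)] finite_act[OF u(2)] finite_fr by auto
  have "card (S - F') = card ?U + (card ?W + card ?N)"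
    unfolding split using finite disjoint by (simp add: card_Un_disjoint)
  then show "even (card (S - F'))"
    using matched_even[OF u(1)] matched_even[OF u(2)] matched(3) by simp
  have "sum sg (S - F') = sum sg ?U + (sum sg ?W + sum sg ?N)"
    unfolding split using finite disjoint by (simp add: sum.union_disjoint)
  then show "sum sg (S - F') = 0"
    using matched_balanced[OF u(1)] matched_balanced[OF u(2)] matched(4) by simp
qed

lemma (in gd_wf) gd_wf_tight:
  assumes u: "u \<in> arr s" "v \<in> arr s" "act s u \<noteq> act s v"
    and S: "S = act s u \<union> act s v"
    and gm: "greedy_match sg S (tm s) (fr s, mt s) (F', M')"
  shows "gd_wf V sg (s\<lparr>act := (\<lambda>w. if w \<in> S then S else act s w), fr := F', mt := M'\<rparr>)"
    (is "gd_wf V sg ?s")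
proof -
  note matched = greedy_match_result[OF gm finite_fr]
  have S_arr: "S \<subseteq> arr s"
    using S act_subset u by blast
  have outside: "act s w \<inter> S = {}" "act s w - F' = act s w - fr s" "F' \<inter> act s w = fr s \<inter> act s w"
    if "w \<in> arr s" "w \<notin> S" for w
    using that S act_disjoint_outside[OF u(1) that(1)] act_disjoint_outside[OF u(2) that(1)]
      matched(1,2) by blast+
  show ?thesis
  proof unfold_locales
    fix w assume "w \<in> arr ?s"
    then have w: "w \<in> arr s" by simp
    have "w \<in> act ?s w \<and> act ?s w \<subseteq> arr ?s \<and> (\<forall>x\<in>act ?s w. act ?s x = act ?s w) \<and>
        even (card (act ?s w - fr ?s)) \<and> sum sg (act ?s w - fr ?s) = 0 \<and>
        (\<forall>a\<in>fr ?s \<inter> act ?s w. \<forall>b\<in>fr ?s \<inter> act ?s w. \<not> is_edge sg a b)"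
    proof (cases "w \<in> S")
      case True
      then show ?thesis
        using S_arr merged_matched_balanced[OF u S gm] matched(6) by simp
    next
      case False
      have "act ?s x = act s w" if "x \<in> act s w" for x
      proof -
        have "x \<notin> S" using that outside(1)[OF w False] by blast
        then show ?thesis using act_eq[OF w that] by simp
      qed
      then show ?thesis
        using False self_in_act[OF w] act_subset[OF w] matched_even[OF w]
          matched_balanced[OF w] free_no_edge[OF w]
        by (simp add: outside[OF w False])
    qed
    then show "w \<in> act ?s w" "act ?s w \<subseteq> arr ?s"
      "even (card (act ?s w - fr ?s))" "sum sg (act ?s w - fr ?s) = 0"
      "\<forall>a\<in>fr ?s \<inter> act ?s w. \<forall>b\<in>fr ?s \<inter> act ?s w. \<not> is_edge sg a b"
      "\<And>x. x \<in> act ?s w \<Longrightarrow> act ?s x = act ?s w"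
      by blast+
  qed (use finite_V arr_subset fr_subset matched(1) y_support in auto)
qed

lemma (in gd_wf) gd_wf_advance:
  assumes "y' = (\<lambda>S. if S \<in> act s ` arr s \<and> S \<inter> fr s \<noteq> {} then y s S + d else y s S)"
  shows "gd_wf V sg (s\<lparr>tm := \<tau>', y := y'\<rparr>)"
proof unfold_locales
  fix S assume "y (s\<lparr>tm := \<tau>', y := y'\<rparr>) S \<noteq> 0"
  then show "S \<subseteq> arr (s\<lparr>tm := \<tau>', y := y'\<rparr>)"
    using assms y_support act_subset by (auto split: if_splits)
qed (simp_all add: finite_V arr_subset fr_subset self_in_act act_subset matched_even
      matched_balanced free_no_edge, rule act_eq)

definition waiting_cost :: "('r \<Rightarrow> real) \<Rightarrow> 'r gd_state \<Rightarrow> real" where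
  "waiting_cost atime s = (\<Sum>u\<in>arr s. (if u \<in> fr s then tm s else mt s u) - atime u)"

definition dual_objective :: "'r set \<Rightarrow> bool \<Rightarrow> ('r \<Rightarrow> int) \<Rightarrow> ('r set \<Rightarrow> real) \<Rightarrow> real" where
  "dual_objective V bip sg Y = (\<Sum>S\<in>Pow V. real (sur bip sg S) * Y S)"

context gd_wf
begin

lemma waiting_cost_arrive:
  assumes "u \<notin> arr s" "atime u = tm s"
  shows "waiting_cost atime (s\<lparr>arr := insert u (arr s), fr := insert u (fr s), act := A, y := Y\<rparr>)
    = waiting_cost atime s"
proof -
  let ?c = "\<lambda>w. (if w \<in> insert u (fr s) then tm s else mt s w) - atime w"
  have "waiting_cost atime (s\<lparr>arr := insert u (arr s), fr := insert u (fr s), act := A, y := Y\<rparr>)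
      = sum ?c (insert u (arr s))"
    by (simp add: waiting_cost_def cong: if_cong)
  also have "\<dots> = sum ?c (arr s)"
    using assms finite_arr by simp
  also have "\<dots> = waiting_cost atime s"
    unfolding waiting_cost_def using assms(1) by (intro sum.cong) auto
  finally show ?thesis .
qed

lemma waiting_cost_tight:
  assumes "greedy_match sg S (tm s) (fr s, mt s) (F', M')"
  shows "waiting_cost atime (s\<lparr>act := A, fr := F', mt := M'\<rparr>) = waiting_cost atime s"
  using greedy_match_result(1,5)[OF assms finite_fr]
  unfolding waiting_cost_def by (intro sum.cong) auto

lemma waiting_cost_advance:
  "waiting_cost atime (s\<lparr>tm := \<tau>', y := Y\<rparr>) = waiting_cost atime s + real (card (fr s)) * (\<tau>' - tm s)"
proof -
  have "waiting_cost atime (s\<lparr>tm := \<tau>', y := Y\<rparr>)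
      = waiting_cost atime s + (\<Sum>w\<in>arr s. if w \<in> fr s then \<tau>' - tm s else 0)"
    unfolding waiting_cost_def sum.distrib[symmetric] by (intro sum.cong) auto
  also have "(\<Sum>w\<in>arr s. if w \<in> fr s then \<tau>' - tm s else 0) = real (card (fr s)) * (\<tau>' - tm s)"
    using sum.inter_restrict[OF finite_arr, of "\<lambda>_. \<tau>' - tm s" "fr s"] fr_subset
    by (simp add: Int_absorb1)
  finally show ?thesis .
qed

lemma growing_sets_eq: "{X \<in> act s ` arr s. X \<inter> fr s \<noteq> {}} = act s ` fr s"
  using fr_subset self_in_act act_eq by blast

lemma act_fibre_fr:
  assumes "w \<in> fr s"
  shows "{x \<in> fr s. act s x = act s w} = fr s \<inter> act s w"
  using assms fr_subset self_in_act act_eq by blast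

text \<open>The growing active sets partition the free requests.\<close>
lemma card_fr_eq_sum_sur:
  assumes "admissible_signs bip sg V"
  shows "card (fr s) = (\<Sum>X\<in>act s ` fr s. sur bip sg X)"
proof -
  have "card (fr s) = (\<Sum>X\<in>act s ` fr s. card {x \<in> fr s. act s x = X})"
    using sum.image_gen[OF finite_fr, of "\<lambda>_. 1::nat" "act s"] by simp
  also have "\<dots> = (\<Sum>X\<in>act s ` fr s. sur bip sg X)"
  proof (rule sum.cong)
    fix X assume "X \<in> act s ` fr s"
    then obtain w where w: "w \<in> fr s" "X = act s w" by blast
    then have "w \<in> arr s" using fr_subset by blast
    have "card (fr s \<inter> act s w) = sur bip sg (act s w)"
      using admissible_signs_subset[OF assms] act_subset[OF \<open>w \<in> arr s\<close>] arr_subset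
        finite_act matched_even matched_balanced free_no_edge \<open>w \<in> arr s\<close>
      by (intro card_unmatched_eq_sur) auto
    then show "card {x \<in> fr s. act s x = X} = sur bip sg X"
      using act_fibre_fr[OF w(1)] w(2) by simp
  qed simp
  finally show ?thesis .
qed

lemma dual_objective_advance:
  assumes "admissible_signs bip sg V"
    and "y' = (\<lambda>S. if S \<in> act s ` arr s \<and> S \<inter> fr s \<noteq> {} then y s S + d else y s S)"
  shows "dual_objective V bip sg y' = dual_objective V bip sg (y s) + real (card (fr s)) * d"
proof -
  have growing_Pow: "act s ` fr s \<subseteq> Pow V"
    using fr_subset act_subset arr_subset by blast
  have "y' = (\<lambda>S. y s S + (if S \<in> act s ` fr s then d else 0))"
    using assms(2) growing_sets_eq by (auto simp: fun_eq_iff)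
  then have "dual_objective V bip sg y'
      = dual_objective V bip sg (y s) + (\<Sum>S\<in>Pow V. if S \<in> act s ` fr s then real (sur bip sg S) * d else 0)"
    unfolding dual_objective_def sum.distrib[symmetric] by (intro sum.cong) (auto simp: algebra_simps)
  also have "(\<Sum>S\<in>Pow V. if S \<in> act s ` fr s then real (sur bip sg S) * d else 0)
      = (\<Sum>S\<in>act s ` fr s. real (sur bip sg S)) * d"
    using sum.inter_restrict[OF finite_Pow_iff[THEN iffD2, OF finite_V],
        of "\<lambda>S. real (sur bip sg S) * d" "act s ` fr s"] growing_Pow
    by (simp add: Int_absorb1 sum_distrib_right)
  also have "(\<Sum>S\<in>act s ` fr s. real (sur bip sg S)) = real (card (fr s))"
    using card_fr_eq_sum_sur[OF assms(1)] by simp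
  finally show ?thesis .
qed

end

lemma (in gd_wf) gd_step_preserves:
  assumes "gd_step V pos atime sg s s'" and signs: "admissible_signs bip sg V"
  shows "gd_wf V sg s' \<and>
    waiting_cost atime s' - dual_objective V bip sg (y s') =
    waiting_cost atime s - dual_objective V bip sg (y s)"
  using assms(1)
proof cases
  case (arrive u)
  have "gd_wf V sg s'"
    unfolding arrive(1) by (rule gd_wf_arrive[OF arrive(2,3)])
  moreover have "waiting_cost atime s' = waiting_cost atime s"
    unfolding arrive(1) by (rule waiting_cost_arrive[where atime = atime, OF arrive(3,4)])
  moreover have "y s' = y s"
    using arrive(1,3) y_support by (auto simp: fun_eq_iff)
  ultimately show ?thesis by simp
next
  case (tight u v S F' M')
  then show ?thesis
    using gd_wf_tight waiting_cost_tight by simp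
next
  case (advance \<tau>' y')
  then show ?thesis
    using gd_wf_advance waiting_cost_advance dual_objective_advance[OF signs] by simp
qed

lemma gd_reachable_invariant:
  assumes "(gd_step V pos atime sg)\<^sup>*\<^sup>* gd_init s" "finite V" "admissible_signs bip sg V"
  shows "gd_wf V sg s \<and> waiting_cost atime s = dual_objective V bip sg (y s)"
  using assms(1)
proof (induction rule: rtranclp_induct)
  case base
  show ?case
    using gd_wf_init[OF assms(2)] by (simp add: gd_init_def waiting_cost_def dual_objective_def)
next
  case (step s s')
  then show ?case
    using gd_wf.gd_step_preserves[OF _ step.hyps(2) assms(3)] by simp
qed

theorem lemma5:
  fixes V :: "'r set" and pos :: "'r \<Rightarrow> 'p::metric_space"
    and atime :: "'r \<Rightarrow> real" and sg :: "'r \<Rightarrow> int" and bip :: bool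
    and s :: "'r gd_state"
  assumes inst: "if bip then mbpmd_instance V atime sg else mpmd_instance V atime sg"
    and run: "(gd_step V pos atime sg)\<^sup>*\<^sup>* gd_init s"
    and finished: "arr s = V" "fr s = {}"
  shows "(\<Sum>u\<in>V. mt s u - atime u) = (\<Sum>S\<in>Pow V. real (sur bip sg S) * y s S)"
proof -
  have "finite V" "admissible_signs bip sg V"
    using instance_finite_admissible_signs[OF inst] by auto
  then have "waiting_cost atime s = dual_objective V bip sg (y s)"
    using gd_reachable_invariant[OF run] by blast
  then show ?thesis
    by (simp add: waiting_cost_def dual_objective_def finished)
qed

end
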